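(* Let $p(x)\in\mathbb{C}[x_1,\ldots,x_n]$ be any polynomial. Then there exists a nonconfluent holonomic hypergeometric (Horn) system of the form $$x_j P_j(\theta)f(x)=Q_j(\theta)f(x),\qquad j=1,\ldots,n,$$ having $p(x)$ as one of its solutions. Moreover, this system can be chosen so that the left ideal in the Weyl algebra generated by the operators $x_jP_j(\theta)-Q_j(\theta)$, $j=1,\ldots,n$, admits a basis consisting of a family of pairwise commuting differential operators.
   Context: Notation: $x=(x_1,\ldots,x_n)$, $\theta=(\theta_1,\ldots,\theta_n)$ with $\theta_j=x_j\frac{\partial}{\partial x_j}$, $e_1,\ldots,e_n$ the standard basis of $\mathbb{Z}^n$. A function $\varphi(s)$ of $s\in\mathbb{C}^n$ is a hypergeometric (Ore–Sato) coefficient if for each $j$ the quotient $\varphi(s+e_j)/\varphi(s)$ is a rational function of $s$, written $P_j(s)/Q_j(s+e_j)$ with polynomials $P_j,Q_j$. The Horn hypergeometric system defined by $\varphi$ is the system $x_jP_j(\theta)f=Q_j(\theta)f$, $j=1,\ldots,n$; any (formal) Laurent series $\sum_s\varphi(s)x^s$ is a formal solution of it. The system is holonomic if it has finite holonomic rank, and nonconfluent if $\deg P_j=\deg Q_j$ for every $j=1,\ldots,n$. *)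

theory Defs
  imports "HOL-Analysis.Analysis" "HOL-Library.Poly_Mapping"
begin

text \<open>
  Multivariate polynomials in the variables indexed by the finite type 'n
  (so n = CARD('n)) with complex coefficients, represented as finitely
  supported maps from exponent vectors (monomials) to coefficients.
  Differential operators from the Weyl algebra are represented by their
  (faithful) action on the polynomial ring C[x].
\<close>

type_synonym 'n mpoly = "('n \<Rightarrow>\<^sub>0 nat) \<Rightarrow>\<^sub>0 complex"
type_synonym 'n diffop = "'n mpoly \<Rightarrow> 'n mpoly"

definition peval :: "'n::finite mpoly \<Rightarrow> ('n \<Rightarrow> complex) \<Rightarrow> complex" where
  "peval P s = (\<Sum>(m::'n \<Rightarrow>\<^sub>0 nat)\<in>Poly_Mapping.keys P. Poly_Mapping.lookup P m * (\<Prod>k\<in>UNIV. s k ^ Poly_Mapping.lookup m k))"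

definition tdeg :: "'n::finite mpoly \<Rightarrow> nat" where
  "tdeg P = (if P = 0 then 0 else Max ((\<lambda>m::'n \<Rightarrow>\<^sub>0 nat. \<Sum>k\<in>UNIV. Poly_Mapping.lookup m k) ` Poly_Mapping.keys P))"

definition xop :: "'n::finite \<Rightarrow> 'n diffop" where
  "xop i f = Poly_Mapping.single (Poly_Mapping.single i 1) 1 * f"

definition mulop :: "'n::finite mpoly \<Rightarrow> 'n diffop" where
  "mulop c f = c * f"

definition pd :: "'n::finite \<Rightarrow> 'n diffop" where
  "pd i f = (\<Sum>(m::'n \<Rightarrow>\<^sub>0 nat)\<in>Poly_Mapping.keys f. Poly_Mapping.single (m - Poly_Mapping.single i 1)
                (of_nat (Poly_Mapping.lookup m i) * Poly_Mapping.lookup f m))"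

definition pdpow :: "('n::finite \<Rightarrow>\<^sub>0 nat) \<Rightarrow> 'n diffop" where
  "pdpow a f = (\<Sum>(m::'n \<Rightarrow>\<^sub>0 nat)\<in>Poly_Mapping.keys f. Poly_Mapping.single (m - a)
                (of_nat (\<Prod>k\<in>UNIV. \<Prod>i<Poly_Mapping.lookup a k. Poly_Mapping.lookup m k - i) * Poly_Mapping.lookup f m))"

definition theta :: "'n::finite \<Rightarrow> 'n diffop" where
  "theta j = xop j \<circ> pd j"

text \<open>P(theta) for a polynomial P(s): since theta^b x^m = m^b x^m, the operator
  P(theta) acts on monomials by P(theta) x^m = P(m) x^m.\<close>
definition theta_op :: "'n::finite mpoly \<Rightarrow> 'n diffop" where
  "theta_op P f = (\<Sum>(m::'n \<Rightarrow>\<^sub>0 nat)\<in>Poly_Mapping.keys f. Poly_Mapping.single m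
                   (peval P (\<lambda>k. of_nat (Poly_Mapping.lookup m k)) * Poly_Mapping.lookup f m))"

definition horn_op :: "('n::finite \<Rightarrow> 'n mpoly) \<Rightarrow> ('n \<Rightarrow> 'n mpoly) \<Rightarrow> 'n \<Rightarrow> 'n diffop" where
  "horn_op P Q j f = xop j (theta_op (P j) f) - theta_op (Q j) f"

inductive_set weyl :: "'n::finite diffop set" where
  weyl_x: "xop i \<in> weyl"
| weyl_d: "pd i \<in> weyl"
| weyl_const: "(\<lambda>f. Poly_Mapping.single 0 c * f) \<in> weyl"
| weyl_add: "A \<in> weyl \<Longrightarrow> B \<in> weyl \<Longrightarrow> (\<lambda>f. A f + B f) \<in> weyl"
| weyl_comp: "A \<in> weyl \<Longrightarrow> B \<in> weyl \<Longrightarrow> A \<circ> B \<in> weyl"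

inductive_set lideal :: "'n::finite diffop set \<Rightarrow> 'n diffop set" for G where
  lideal_gen: "L \<in> G \<Longrightarrow> L \<in> lideal G"
| lideal_zero: "(\<lambda>f. 0) \<in> lideal G"
| lideal_add: "A \<in> lideal G \<Longrightarrow> B \<in> lideal G \<Longrightarrow> (\<lambda>f. A f + B f) \<in> lideal G"
| lideal_mult: "A \<in> weyl \<Longrightarrow> B \<in> lideal G \<Longrightarrow> A \<circ> B \<in> lideal G"

definition shift :: "('n \<Rightarrow> complex) \<Rightarrow> 'n \<Rightarrow> 'n \<Rightarrow> complex" where
  "shift s j = s(j := s j + 1)"

text \<open>(P, Q) define a Horn hypergeometric system: there is a hypergeometric
  (Ore--Sato) coefficient phi with phi(s+e_j)/phi(s) = P_j(s)/Q_j(s+e_j),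
  i.e. phi is nonzero and satisfies phi(s+e_j) Q_j(s+e_j) = P_j(s) phi(s)
  on a dense open subset of C^n (off the poles/zeros of phi), Q_j nonzero.\<close>
definition horn_system :: "('n::finite \<Rightarrow> 'n mpoly) \<Rightarrow> ('n \<Rightarrow> 'n mpoly) \<Rightarrow> bool" where
  "horn_system P Q \<longleftrightarrow> (\<forall>j. Q j \<noteq> 0) \<and>
     (\<exists>(\<phi> :: ('n \<Rightarrow> complex) \<Rightarrow> complex) U. open U \<and> closure U = UNIV \<and>
        (\<forall>s\<in>U. \<phi> s \<noteq> 0 \<and>
           (\<forall>j. \<phi> (shift s j) * peval (Q j) (shift s j) = peval (P j) s * \<phi> s)))"

definition nonconfluent :: "('n::finite \<Rightarrow> 'n mpoly) \<Rightarrow> ('n \<Rightarrow> 'n mpoly) \<Rightarrow> bool" where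
  "nonconfluent P Q \<longleftrightarrow> (\<forall>j. tdeg (P j) = tdeg (Q j))"

text \<open>Finite holonomic rank: R/RI is finite-dimensional over C(x), where
  R = C(x)<d> and I is the Weyl-algebra ideal of the system; equivalently
  (clearing denominators) finitely many d^b, b in B, span R/RI over C(x):
  for each a there are polynomials q \<noteq> 0 and c_b with
  q d^a - sum_b c_b d^b in I.\<close>
definition holonomic :: "('n::finite \<Rightarrow> 'n mpoly) \<Rightarrow> ('n \<Rightarrow> 'n mpoly) \<Rightarrow> bool" where
  "holonomic P Q \<longleftrightarrow> (\<exists>B. finite B \<and> (\<forall>a. \<exists>q c. q \<noteq> 0 \<and>
      (\<lambda>f. mulop q (pdpow a f) - (\<Sum>b\<in>B. mulop (c b) (pdpow b f)))
        \<in> lideal (Set.range (horn_op P Q))))"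

end

theory Submission imports Defs "HOL-Computational_Algebra.Polynomial" begin

text \<open>
  Choose \<open>M\<close> larger than every exponent occurring in \<open>p\<close> and take the falling factorials
  \<open>Q\<^sub>j(s) = s\<^sub>j(s\<^sub>j - 1)\<cdots>(s\<^sub>j - M + 1)\<close> and \<open>P\<^sub>j(s) = Q\<^sub>j(s + e\<^sub>j)\<close>, so that \<open>\<phi> = 1\<close> is a
  hypergeometric coefficient and \<open>deg P\<^sub>j = deg Q\<^sub>j = M\<close>. The Horn operator \<open>H\<^sub>j\<close> maps \<open>x\<^sup>m\<close>
  to \<open>Q\<^sub>j(m + e\<^sub>j) x\<^sup>m\<^sup>+\<^sup>e\<^sup>\<^sub>j - Q\<^sub>j(m) x\<^sup>m\<close>, which vanishes when \<open>m\<^sub>j + 1 < M\<close>; hence \<open>H\<^sub>j p = 0\<close>,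
  and operators \<open>H\<^sub>j\<close>, \<open>H\<^sub>k\<close> in different variables commute, so the \<open>H\<^sub>j\<close> themselves are
  a commuting basis. For holonomicity, \<open>H\<^sub>j = (x\<^sub>j\<^sup>M\<^sup>+\<^sup>1 - x\<^sub>j\<^sup>M) \<partial>\<^sub>j\<^sup>M + M x\<^sub>j\<^sup>M \<partial>\<^sub>j\<^sup>M\<^sup>-\<^sup>1\<close>: modulo the
  ideal, and after multiplication by a nonzero polynomial, every \<open>\<partial>\<^sup>a\<close> reduces to a
  combination of the finitely many \<open>\<partial>\<^sup>b\<close> with all \<open>b\<^sub>k < M\<close>.
\<close>

abbreviation lookup where "lookup \<equiv> Poly_Mapping.lookup"
abbreviation single where "single \<equiv> Poly_Mapping.single"
abbreviation keys where "keys \<equiv> Poly_Mapping.keys"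

section \<open>Operators acting monomialwise\<close>

lemma sum_single_lookup: "(\<Sum>m\<in>keys f. single m (lookup f m)) = (f :: 'a \<Rightarrow>\<^sub>0 'b::comm_monoid_add)"
  by (rule poly_mapping_eqI) (cases "lookup f k = 0"; simp add: lookup_sum lookup_single when_def in_keys_iff)

lemma sum_lookup_single: "(\<Sum>k\<in>UNIV. lookup (single (j::'n::finite) r) k) = r"
  by (simp add: lookup_single when_def)

lemma additive_eq_on_singles:
  fixes A B :: "('a \<Rightarrow>\<^sub>0 'c::ab_group_add) \<Rightarrow> 'b::ab_group_add"
  assumes "Modules.additive A" "Modules.additive B" "\<And>m c. A (single m c) = B (single m c)"
  shows "A = B"
proof
  fix f
  have "A f = A (\<Sum>m\<in>keys f. single m (lookup f m))" by (simp only: sum_single_lookup)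
  also have "\<dots> = (\<Sum>m\<in>keys f. B (single m (lookup f m)))"
    by (simp add: Modules.additive.sum[OF assms(1)] assms(3))
  also have "\<dots> = B (\<Sum>m\<in>keys f. single m (lookup f m))"
    by (simp add: Modules.additive.sum[OF assms(2)])
  finally show "A f = B f" by (simp only: sum_single_lookup)
qed

lemma additive_add: "Modules.additive A \<Longrightarrow> Modules.additive B \<Longrightarrow> Modules.additive (\<lambda>f. A f + B f)"
  unfolding Modules.additive_def by (simp add: algebra_simps)

lemma additive_diff: "Modules.additive A \<Longrightarrow> Modules.additive B \<Longrightarrow> Modules.additive (\<lambda>f. A f - B f)"
  unfolding Modules.additive_def by (simp add: algebra_simps)

lemma additive_comp: "Modules.additive A \<Longrightarrow> Modules.additive B \<Longrightarrow> Modules.additive (\<lambda>f. A (B f))"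
  unfolding Modules.additive_def by simp

lemma additive_mult_left: "Modules.additive A \<Longrightarrow> Modules.additive (\<lambda>f. (c::'a::ring) * A f)"
  unfolding Modules.additive_def by (simp add: algebra_simps)

definition monomial_map ::
    "(('n \<Rightarrow>\<^sub>0 nat) \<Rightarrow> ('n \<Rightarrow>\<^sub>0 nat)) \<Rightarrow> (('n \<Rightarrow>\<^sub>0 nat) \<Rightarrow> complex) \<Rightarrow> 'n diffop" where
  "monomial_map \<sigma> w f = (\<Sum>m\<in>keys f. single (\<sigma> m) (w m * lookup f m))"

lemma additive_monomial_map: "Modules.additive (monomial_map \<sigma> w)"
  by unfold_locales
    (unfold monomial_map_def, rule setsum_keys_plus_distrib, simp_all add: distrib_left single_add)

lemma monomial_map_single: "monomial_map \<sigma> w (single m c) = single (\<sigma> m) (w m * c)"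
  by (simp add: monomial_map_def)

lemma pd_eq_monomial_map: "pd i = monomial_map (\<lambda>m. m - single i 1) (\<lambda>m. of_nat (lookup m i))"
  by (rule ext) (simp add: pd_def monomial_map_def)

lemma pdpow_eq_monomial_map:
  "pdpow a = monomial_map (\<lambda>m. m - a) (\<lambda>m. of_nat (\<Prod>k\<in>UNIV. \<Prod>i<lookup a k. lookup m k - i))"
  by (rule ext) (simp add: pdpow_def monomial_map_def)

lemma theta_op_eq_monomial_map: "theta_op P = monomial_map (\<lambda>m. m) (\<lambda>m. peval P (\<lambda>k. of_nat (lookup m k)))"
  by (rule ext) (simp add: theta_op_def monomial_map_def)

lemma additive_xop: "Modules.additive (xop i)"
  by unfold_locales (simp add: xop_def algebra_simps)

lemma additive_pd: "Modules.additive (pd i)"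
  by (simp add: pd_eq_monomial_map additive_monomial_map)

lemma additive_pdpow: "Modules.additive (pdpow a)"
  by (simp add: pdpow_eq_monomial_map additive_monomial_map)

lemma additive_theta_op: "Modules.additive (theta_op P)"
  by (simp add: theta_op_eq_monomial_map additive_monomial_map)

lemma additive_horn_op: "Modules.additive (horn_op P Q j)"
  unfolding horn_op_def
  by (rule additive_diff[OF additive_comp[OF additive_xop additive_theta_op] additive_theta_op])

lemma xop_single: "xop i (single m c) = single (m + single i 1) c"
  by (simp add: xop_def mult_single add.commute)

lemma horn_op_single: "horn_op P Q j (single m c) =
    single (m + single j 1) (peval (P j) (\<lambda>k. of_nat (lookup m k)) * c)
  - single m (peval (Q j) (\<lambda>k. of_nat (lookup m k)) * c)"
  by (simp add: horn_op_def theta_op_eq_monomial_map monomial_map_single xop_single)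

definition ffact :: "nat \<Rightarrow> nat \<Rightarrow> complex" where
  "ffact r n = (\<Prod>i<r. of_nat n - of_nat i)"

lemma ffact_0 [simp]: "ffact 0 n = 1"
  by (simp add: ffact_def)

lemma ffact_1 [simp]: "ffact (Suc 0) n = of_nat n"
  by (simp add: ffact_def)

lemma ffact_Suc: "ffact (Suc r) n = ffact r n * (of_nat n - of_nat r)"
  by (simp add: ffact_def)

lemma ffact_eq_0: "n < r \<Longrightarrow> ffact r n = 0"
  unfolding ffact_def by (rule prod_zero) auto

lemma ffact_nonzero_imp_le: "ffact r n \<noteq> 0 \<Longrightarrow> r \<le> n"
  using ffact_eq_0 not_le by blast

lemma of_nat_prod_diff: "(\<Prod>i<r. of_nat (n - i) :: complex) = ffact r n"
proof (induction r)
  case (Suc r)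
  then show ?case
    by (cases "n < Suc r") (auto simp: ffact_Suc ffact_eq_0 of_nat_diff)
qed simp

lemma ffact_add: "ffact (r + s) n = ffact r (n - s) * ffact s n"
proof (induction r)
  case (Suc r)
  then show ?case
    by (cases "n < s") (auto simp: ffact_eq_0 ffact_Suc of_nat_diff algebra_simps)
qed simp

lemma ffact_Suc_Suc: "ffact (Suc r) (Suc n) = of_nat (Suc n) * ffact r n"
  by (induction r) (simp_all add: ffact_Suc algebra_simps)

lemma pdpow_single:
  "pdpow a (single m c) = single (m - a) ((\<Prod>k\<in>UNIV. ffact (lookup a k) (lookup m k)) * c)"
  by (simp add: pdpow_eq_monomial_map monomial_map_single of_nat_prod_diff)

lemma pd_single: "pd i (single m c) = single (m - single i 1) (of_nat (lookup m i) * c)"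
  by (simp add: pd_eq_monomial_map monomial_map_single)

lemma prod_ffact_single:
  "(\<Prod>k\<in>UNIV. ffact (lookup (single (i::'n::finite) r) k) (lookup m k)) = ffact r (lookup m i)"
proof -
  have "\<And>k. ffact (lookup (single i r) k) (lookup m k) = (if k = i then ffact r (lookup m i) else 1)"
    by (auto simp: lookup_single when_def)
  then show ?thesis by (simp add: prod.delta)
qed

lemma pd_eq_pdpow: "pd i = pdpow (single i 1)"
  by (rule additive_eq_on_singles[OF additive_pd additive_pdpow])
    (simp add: pd_single pdpow_single prod_ffact_single)

lemma pdpow_0: "pdpow 0 = (\<lambda>f. f)"
  by (rule additive_eq_on_singles[OF additive_pdpow]) (unfold_locales, simp_all add: pdpow_single)

lemma pdpow_add: "pdpow (a + b) = pdpow a \<circ> pdpow b"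
proof (rule additive_eq_on_singles[OF additive_pdpow])
  show "Modules.additive (pdpow a \<circ> pdpow b)"
    using additive_comp[OF additive_pdpow additive_pdpow] by (simp add: comp_def)
  fix m c
  have "m - (a + b) = m - b - a" by (simp add: diff_diff_add add.commute)
  then show "pdpow (a + b) (single m c) = (pdpow a \<circ> pdpow b) (single m c)"
    by (simp add: pdpow_single lookup_add lookup_minus ffact_add prod.distrib mult.assoc)
qed

lemma pd_pdpow: "pd k (pdpow b f) = pdpow (single k 1 + b) f"
  by (simp add: pdpow_add pd_eq_pdpow)

lemma pd_mult_single:
  "pd k (single a \<alpha> * single m \<beta>) = single a \<alpha> * pd k (single m \<beta>) + pd k (single a \<alpha>) * single m \<beta>"
proof -
  have shift: "0 < lookup m' k \<Longrightarrow> a' + (m' - single k 1) = a' + m' - single k (1::nat)" for a' m'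
    by (rule poly_mapping_eqI) (auto simp: lookup_add lookup_minus lookup_single when_def)
  have "single a \<alpha> * pd k (single m \<beta>) = single (a + m - single k 1) (of_nat (lookup m k) * \<alpha> * \<beta>)"
  proof (cases "lookup m k = 0")
    case False
    then have "a + (m - single k 1) = a + m - single k 1" by (intro shift) simp
    then show ?thesis by (simp only: pd_single mult_single) (simp add: mult_ac)
  qed (simp add: pd_single mult_single)
  moreover have "pd k (single a \<alpha>) * single m \<beta> = single (a + m - single k 1) (of_nat (lookup a k) * \<alpha> * \<beta>)"
  proof (cases "lookup a k = 0")
    case False
    then have "a - single k 1 + m = a + m - single k 1" using shift[of a m] by (simp add: add.commute)
    then show ?thesis by (simp only: pd_single mult_single mult.assoc)
  qed (simp add: pd_single mult_single)
  ultimately show ?thesis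
    by (simp add: mult_single pd_single lookup_add single_add[symmetric] algebra_simps)
qed

lemma pd_mult: "pd k (c * f) = c * pd k f + pd k c * f"
proof -
  have pd_add: "pd k (g + h) = pd k g + pd k h" for g h
    by (rule Modules.additive.add[OF additive_pd])
  have pd_mult_single_right: "pd k (c * single m \<beta>) = c * pd k (single m \<beta>) + pd k c * single m \<beta>"
    for c m \<beta>
  proof -
    have "(\<lambda>c. pd k (c * single m \<beta>)) = (\<lambda>c. c * pd k (single m \<beta>) + pd k c * single m \<beta>)"
      by (rule additive_eq_on_singles) (unfold_locales, simp_all add: pd_mult_single pd_add algebra_simps)
    then show ?thesis by (rule fun_cong)
  qed
  have "(\<lambda>f. pd k (c * f)) = (\<lambda>f. c * pd k f + pd k c * f)"
    by (rule additive_eq_on_singles)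
      (unfold_locales, simp_all add: pd_mult_single_right pd_add algebra_simps)
  then show ?thesis by (rule fun_cong)
qed

definition monomial_value :: "('n::finite \<Rightarrow>\<^sub>0 nat) \<Rightarrow> ('n \<Rightarrow> complex) \<Rightarrow> complex" where
  "monomial_value m s = (\<Prod>k\<in>UNIV. s k ^ lookup m k)"

lemma monomial_value_single: "monomial_value (single j r) s = s j ^ r"
proof -
  have "\<And>k. s k ^ lookup (single j r) k = (if k = j then s j ^ r else 1)"
    by (auto simp: lookup_single when_def)
  then show ?thesis by (simp add: monomial_value_def prod.delta)
qed

lemma peval_single: "peval (single m c) s = c * monomial_value m s"
  by (simp add: peval_def monomial_value_def)

lemma additive_peval: "Modules.additive (\<lambda>P. peval P s)"
  by unfold_locales
    (unfold peval_def, rule setsum_keys_plus_distrib, simp_all add: distrib_right)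

lemma peval_0 [simp]: "peval 0 s = 0"
  by (simp add: peval_def)

lemma peval_1 [simp]: "peval 1 s = 1"
  by (simp add: single_one[symmetric] peval_single monomial_value_def del: single_one)

lemma peval_mult: "peval (P * R) s = peval P s * peval R s"
proof -
  have peval_add: "peval (f + g) s = peval f s + peval g s" for f g
    by (rule Modules.additive.add[OF additive_peval])
  have peval_mult_single: "peval (P * single b \<beta>) s = peval P s * peval (single b \<beta>) s" for P b \<beta>
  proof -
    have "(\<lambda>P. peval (P * single b \<beta>) s) = (\<lambda>P. peval P s * peval (single b \<beta>) s)"
      by (rule additive_eq_on_singles)
        (unfold_locales, simp_all add: peval_add algebra_simps mult_single peval_single
          monomial_value_def lookup_add power_add prod.distrib)
    then show ?thesis by (rule fun_cong)
  qed
  have "(\<lambda>R. peval (P * R) s) = (\<lambda>R. peval P s * peval R s)"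
    by (rule additive_eq_on_singles)
      (unfold_locales, simp_all add: peval_add algebra_simps peval_mult_single)
  then show ?thesis by (rule fun_cong)
qed

lemma additive_weyl: "A \<in> weyl \<Longrightarrow> Modules.additive A"
proof (induction rule: weyl.induct)
  case (weyl_const c)
  show ?case by unfold_locales (simp add: distrib_left)
qed (simp_all add: additive_xop additive_pd additive_add additive_comp[unfolded comp_def] comp_def)

lemma weyl_compI: "A \<in> weyl \<Longrightarrow> B \<in> weyl \<Longrightarrow> (\<lambda>f. A (B f)) \<in> weyl"
  using weyl_comp[of A B] by (simp add: comp_def)

lemma weyl_id: "(\<lambda>f. f) \<in> weyl"
proof -
  have "(\<lambda>f::'n::finite mpoly. f) = (\<lambda>f. single 0 1 * f)" by (simp add: fun_eq_iff)
  then show ?thesis using weyl_const[of 1] by metis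
qed

lemma weyl_zero: "(\<lambda>f. 0) \<in> weyl"
proof -
  have "(\<lambda>f::'n::finite mpoly. 0) = (\<lambda>f. single 0 0 * f)" by (simp add: fun_eq_iff)
  then show ?thesis using weyl_const[of 0] by metis
qed

lemma weyl_sum: "finite S \<Longrightarrow> (\<And>x. x \<in> S \<Longrightarrow> A x \<in> weyl) \<Longrightarrow> (\<lambda>f. \<Sum>x\<in>S. A x f) \<in> weyl"
  by (induction S rule: finite_induct) (auto intro: weyl_zero weyl_add)

lemma exponent_induct [case_names zero step]:
  fixes P :: "('n::finite \<Rightarrow>\<^sub>0 nat) \<Rightarrow> bool"
  assumes "P 0" and "\<And>m k. P m \<Longrightarrow> P (m + single k 1)"
  shows "P m"
proof (induction "\<Sum>k\<in>UNIV. lookup m k" arbitrary: m)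
  case 0
  then have "m = 0" by (intro poly_mapping_eqI) simp
  then show ?case using assms(1) by simp
next
  case (Suc d)
  then obtain k where k: "lookup m k > 0"
    by (metis gr0I sum.neutral nat.distinct(1))
  define m' where "m' = m - single k 1"
  have m: "m = m' + single k 1" unfolding m'_def using k
    by (intro poly_mapping_eqI) (auto simp: lookup_add lookup_minus lookup_single when_def)
  have "(\<Sum>k\<in>UNIV. lookup m k) = (\<Sum>k\<in>UNIV. lookup m' k) + 1"
    by (subst m) (simp add: lookup_add sum.distrib sum_lookup_single)
  then have "P m'" using Suc by simp
  then show ?case using m assms(2) by metis
qed

lemma weyl_mult: "(\<lambda>f. c * f) \<in> weyl"
proof -
  have weyl_mult_monomial: "(\<lambda>f. single m 1 * f) \<in> weyl" for m
  proof (induction m rule: exponent_induct)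
    case zero
    then show ?case using weyl_id by simp
  next
    case (step m k)
    have "single (m + single k 1) 1 * f = xop k (single m 1 * f)" for f
      by (simp add: xop_def mult_single add.commute mult.assoc[symmetric])
    then show ?case using weyl_compI[OF weyl_x step] by simp
  qed
  have "c * f = (\<Sum>m\<in>keys c. single 0 (lookup c m) * (single m 1 * f))" for f
  proof -
    have "c * f = (\<Sum>m\<in>keys c. single m (lookup c m)) * f" by (simp only: sum_single_lookup)
    also have "\<dots> = (\<Sum>m\<in>keys c. single 0 (lookup c m) * (single m 1 * f))"
      by (simp add: sum_distrib_right mult.assoc[symmetric] mult_single)
    finally show ?thesis .
  qed
  moreover have "(\<lambda>f. \<Sum>m\<in>keys c. single 0 (lookup c m) * (single m 1 * f)) \<in> weyl"
    by (intro weyl_sum weyl_compI[OF weyl_const] weyl_mult_monomial) auto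
  ultimately show ?thesis by simp
qed

lemma weyl_pdpow: "pdpow a \<in> weyl"
proof (induction a rule: exponent_induct)
  case zero
  then show ?case using weyl_id by (simp add: pdpow_0)
next
  case (step a k)
  have "pdpow (a + single k 1) = pd k \<circ> pdpow a"
    by (simp add: add.commute[of a] pdpow_add pd_eq_pdpow)
  then show ?case by (simp only: weyl_comp[OF weyl_d step])
qed

section \<open>A Horn system with falling-factorial coefficients\<close>

definition falling_poly :: "nat \<Rightarrow> complex poly" where
  "falling_poly M = (\<Prod>i<M. [:- of_nat i, 1:])"

definition poly_in_var :: "'n \<Rightarrow> complex poly \<Rightarrow> 'n mpoly" where
  "poly_in_var j v = (\<Sum>k\<le>degree v. single (single j k) (coeff v k))"

definition falling_Q :: "nat \<Rightarrow> 'n \<Rightarrow> 'n mpoly" where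
  "falling_Q M j = poly_in_var j (falling_poly M)"

definition falling_P :: "nat \<Rightarrow> 'n \<Rightarrow> 'n mpoly" where
  "falling_P M j = poly_in_var j (falling_poly M \<circ>\<^sub>p [:1, 1:])"

abbreviation falling_horn :: "nat \<Rightarrow> 'n::finite \<Rightarrow> 'n diffop" where
  "falling_horn M \<equiv> horn_op (falling_P M) (falling_Q M)"

definition lead_coeff_horn :: "nat \<Rightarrow> 'n \<Rightarrow> 'n mpoly" where
  "lead_coeff_horn M j = single (single j (Suc M)) 1 - single (single j M) 1"

lemma poly_falling_poly: "poly (falling_poly M) z = (\<Prod>i<M. z - of_nat i)"
  by (simp add: falling_poly_def poly_prod)

lemma degree_falling_poly: "degree (falling_poly M) = M"
  unfolding falling_poly_def by (subst degree_prod_eq_sum_degree) auto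

lemma peval_poly_in_var: "peval (poly_in_var j v) s = poly v (s j)"
  by (simp add: poly_in_var_def Modules.additive.sum[OF additive_peval] peval_single
      monomial_value_single poly_altdef)

lemma peval_falling_Q: "peval (falling_Q M j) (\<lambda>k. of_nat (lookup m k)) = ffact M (lookup m j)"
  by (simp add: falling_Q_def peval_poly_in_var poly_falling_poly ffact_def)

lemma peval_falling_P: "peval (falling_P M j) (\<lambda>k. of_nat (lookup m k)) = ffact M (Suc (lookup m j))"
  by (simp add: falling_P_def peval_poly_in_var poly_falling_poly ffact_def poly_pcompose add.commute)

lemma falling_horn_single: "falling_horn M j (single m c) =
    single (m + single j 1) (ffact M (Suc (lookup m j)) * c) - single m (ffact M (lookup m j) * c)"
  by (simp add: horn_op_single peval_falling_P peval_falling_Q)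

lemma ffact_Suc_eq_add: "r \<ge> 1 \<Longrightarrow> ffact r (Suc n) = ffact r n + of_nat r * ffact (r - 1) n"
  by (cases r) (simp_all only: ffact_Suc_Suc, simp add: ffact_Suc algebra_simps)

text \<open>The normal form \<open>(x\<^sub>j\<^sup>M\<^sup>+\<^sup>1 - x\<^sub>j\<^sup>M) \<partial>\<^sub>j\<^sup>M + M x\<^sub>j\<^sup>M \<partial>\<^sub>j\<^sup>M\<^sup>-\<^sup>1\<close>
  of the Horn operator comes from \<open>x\<^sup>M \<partial>\<^sup>M x\<^sup>m = ffact M m x\<^sup>m\<close>.\<close>
lemma falling_horn_eq_single:
  assumes "M \<ge> 1"
  shows "falling_horn M j (single m c) = lead_coeff_horn M j * pdpow (single j M) (single m c)
    + single (single j M) (of_nat M) * pdpow (single j (M - 1)) (single m c)"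
proof -
  define F where "F = ffact M (lookup m j)"
  define F' where "F' = ffact (M - 1) (lookup m j)"
  have shift_up: "single (single j (Suc M) + (m - single j M)) (F * c) = single (m + single j 1) (F * c)"
    and cancel: "single (single j M + (m - single j M)) (F * c) = single m (F * c)"
  proof -
    have "M \<le> lookup m j" if "F * c \<noteq> 0"
      using that ffact_nonzero_imp_le unfolding F_def by auto
    then have "F * c \<noteq> 0 \<Longrightarrow>
        single j (Suc M) + (m - single j M) = m + single j 1 \<and> single j M + (m - single j M) = m"
      by (auto intro!: poly_mapping_eqI simp: lookup_add lookup_minus lookup_single when_def)
    then show "single (single j (Suc M) + (m - single j M)) (F * c) = single (m + single j 1) (F * c)"
      "single (single j M + (m - single j M)) (F * c) = single m (F * c)"
      by (metis single_zero)+
  qed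
  have shift_up': "single (single j M + (m - single j (M - 1))) (of_nat M * (F' * c))
      = single (m + single j 1) (of_nat M * (F' * c))"
  proof (cases "F' * c = 0")
    case False
    then have "M - 1 \<le> lookup m j" unfolding F'_def using ffact_nonzero_imp_le by auto
    then have "single j M + (m - single j (M - 1)) = m + single j 1" using assms
      by (auto intro!: poly_mapping_eqI simp: lookup_add lookup_minus lookup_single when_def)
    then show ?thesis by simp
  qed auto
  have "lead_coeff_horn M j * pdpow (single j M) (single m c)
      + single (single j M) (of_nat M) * pdpow (single j (M - 1)) (single m c)
    = single (single j (Suc M) + (m - single j M)) (F * c) - single (single j M + (m - single j M)) (F * c)
      + single (single j M + (m - single j (M - 1))) (of_nat M * (F' * c))"
    by (simp only: lead_coeff_horn_def pdpow_single prod_ffact_single left_diff_distrib mult_single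
        F_def F'_def mult_1_left)
  also have "\<dots> = single (m + single j 1) ((F + of_nat M * F') * c) - single m (F * c)"
    by (simp only: shift_up cancel shift_up') (simp add: single_add algebra_simps)
  finally show ?thesis
    by (simp add: falling_horn_single ffact_Suc_eq_add[OF assms] F_def F'_def)
qed

lemma falling_horn_eq:
  assumes "M \<ge> 1"
  shows "falling_horn M j = (\<lambda>f. lead_coeff_horn M j * pdpow (single j M) f
    + single (single j M) (of_nat M) * pdpow (single j (M - 1)) f)"
  by (rule additive_eq_on_singles[OF additive_horn_op], intro additive_add additive_mult_left additive_pdpow)
    (rule falling_horn_eq_single[OF assms])

lemma weyl_falling_horn:
  assumes "M \<ge> 1"
  shows "falling_horn M j \<in> weyl"
  by (simp only: falling_horn_eq[OF assms] weyl_add weyl_compI[OF weyl_mult weyl_pdpow])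

lemma pdpow_falling_horn_commute:
  assumes "lookup b j = 0"
  shows "pdpow b (falling_horn M j f) = falling_horn M j (pdpow b f)"
proof -
  have "(\<lambda>f. pdpow b (falling_horn M j f)) = (\<lambda>f. falling_horn M j (pdpow b f))"
  proof (rule additive_eq_on_singles)
    show "Modules.additive (\<lambda>f. pdpow b (falling_horn M j f))"
      by (rule additive_comp[OF additive_pdpow additive_horn_op])
    show "Modules.additive (\<lambda>f. falling_horn M j (pdpow b f))"
      by (rule additive_comp[OF additive_horn_op additive_pdpow])
    fix m c
    have "(\<Prod>k\<in>UNIV. ffact (lookup b k) (lookup (m + single j 1) k))
        = (\<Prod>k\<in>UNIV. ffact (lookup b k) (lookup m k))"
      by (rule prod.cong) (auto simp: lookup_add lookup_single when_def assms)
    moreover have "m + single j 1 - b = m - b + single j 1" using assms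
      by (intro poly_mapping_eqI) (auto simp: lookup_add lookup_minus lookup_single when_def)
    moreover have "lookup (m - b) j = lookup m j" using assms by (simp add: lookup_minus)
    ultimately show "pdpow b (falling_horn M j (single m c)) = falling_horn M j (pdpow b (single m c))"
      by (simp add: falling_horn_single pdpow_single Modules.additive.diff[OF additive_pdpow] mult_ac)
  qed
  then show ?thesis by (rule fun_cong)
qed

lemma falling_horn_commute: "falling_horn M j \<circ> falling_horn M k = falling_horn M k \<circ> falling_horn M j"
proof (cases "j = k")
  case False
  show ?thesis
  proof (rule additive_eq_on_singles)
    show "Modules.additive (falling_horn M j \<circ> falling_horn M k)"
      "Modules.additive (falling_horn M k \<circ> falling_horn M j)"
      using additive_comp[OF additive_horn_op additive_horn_op] by (simp_all add: comp_def)
    fix m c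
    show "(falling_horn M j \<circ> falling_horn M k) (single m c) = (falling_horn M k \<circ> falling_horn M j) (single m c)"
      using False by (simp add: falling_horn_single Modules.additive.diff[OF additive_horn_op]
          lookup_add lookup_single when_def not_sym[OF False] algebra_simps add.left_commute)
  qed
qed simp

lemma falling_horn_annihilates:
  assumes "\<And>m k. m \<in> keys p \<Longrightarrow> Suc (lookup m k) < M"
  shows "falling_horn M j p = 0"
proof -
  have "falling_horn M j p = (\<Sum>m\<in>keys p. falling_horn M j (single m (lookup p m)))"
    by (simp only: Modules.additive.sum[OF additive_horn_op, symmetric] sum_single_lookup)
  also have "\<dots> = 0"
  proof (intro sum.neutral ballI)
    fix m assume "m \<in> keys p"
    then have "Suc (lookup m j) < M" by (rule assms)
    then have "ffact M (Suc (lookup m j)) = 0" "ffact M (lookup m j) = 0" by (simp_all add: ffact_eq_0)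
    then show "falling_horn M j (single m (lookup p m)) = 0" by (simp add: falling_horn_single)
  qed
  finally show ?thesis .
qed

section \<open>Holonomic rank\<close>

lemma lideal_weylI: "A \<in> weyl \<Longrightarrow> B \<in> lideal G \<Longrightarrow> (\<lambda>f. A (B f)) \<in> lideal G"
  using lideal_mult[of A B G] by (simp add: comp_def)

lemma lideal_mult_left: "B \<in> lideal G \<Longrightarrow> (\<lambda>f. r * B f) \<in> lideal G"
  by (rule lideal_weylI[OF weyl_mult])

definition lideal_cong :: "'n::finite diffop set \<Rightarrow> 'n diffop \<Rightarrow> 'n diffop \<Rightarrow> bool" where
  "lideal_cong G X Y \<longleftrightarrow> (\<lambda>f. X f - Y f) \<in> lideal G"

lemma lideal_cong_refl: "lideal_cong G X X"
  unfolding lideal_cong_def using lideal_zero[of G] by simp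

lemma lideal_cong_add:
  "lideal_cong G X1 Y1 \<Longrightarrow> lideal_cong G X2 Y2 \<Longrightarrow> lideal_cong G (\<lambda>f. X1 f + X2 f) (\<lambda>f. Y1 f + Y2 f)"
  unfolding lideal_cong_def using lideal_add[of "\<lambda>f. X1 f - Y1 f" G "\<lambda>f. X2 f - Y2 f"]
  by (simp add: algebra_simps)

lemma lideal_cong_weyl: "A \<in> weyl \<Longrightarrow> lideal_cong G X Y \<Longrightarrow> lideal_cong G (\<lambda>f. A (X f)) (\<lambda>f. A (Y f))"
  unfolding lideal_cong_def using Modules.additive.diff[OF additive_weyl] lideal_weylI by fastforce

lemma lideal_cong_mult_left: "lideal_cong G X Y \<Longrightarrow> lideal_cong G (\<lambda>f. r * X f) (\<lambda>f. r * Y f)"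
  by (rule lideal_cong_weyl[OF weyl_mult])

lemma lideal_cong_diff:
  "lideal_cong G X1 Y1 \<Longrightarrow> lideal_cong G X2 Y2 \<Longrightarrow> lideal_cong G (\<lambda>f. X1 f - X2 f) (\<lambda>f. Y1 f - Y2 f)"
  using lideal_cong_add[OF _ lideal_cong_mult_left[of G X2 Y2 "-1"], of X1 Y1] by simp

lemma lideal_cong_trans [trans]: "lideal_cong G X Y \<Longrightarrow> lideal_cong G Y Z \<Longrightarrow> lideal_cong G X Z"
  unfolding lideal_cong_def using lideal_add[of "\<lambda>f. X f - Y f" G "\<lambda>f. Y f - Z f"] by simp

lemma lideal_cong_sum:
  "finite S \<Longrightarrow> (\<And>x. x \<in> S \<Longrightarrow> lideal_cong G (X x) (Y x))
    \<Longrightarrow> lideal_cong G (\<lambda>f. \<Sum>x\<in>S. X x f) (\<lambda>f. \<Sum>x\<in>S. Y x f)"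
proof (induction S rule: finite_induct)
  case (insert x S)
  then show ?case using lideal_cong_add[of G "X x" "Y x"] by simp
qed (simp add: lideal_cong_refl)

definition exponent_box :: "nat \<Rightarrow> ('n::finite \<Rightarrow>\<^sub>0 nat) set" where
  "exponent_box M = {b. \<forall>k. lookup b k < M}"

lemma finite_exponent_box: "finite (exponent_box M :: ('n::finite \<Rightarrow>\<^sub>0 nat) set)"
proof -
  have "inj (lookup :: ('n::finite \<Rightarrow>\<^sub>0 nat) \<Rightarrow> _)"
    by (auto intro: injI poly_mapping_eqI)
  moreover have "finite (PiE (UNIV::'n set) (\<lambda>_. {..<M}))"
    by (rule finite_PiE) auto
  moreover have "exponent_box M = lookup -` PiE (UNIV::'n set) (\<lambda>_. {..<M})"
    by (auto simp: exponent_box_def PiE_iff)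
  ultimately show ?thesis by (simp add: finite_vimageI)
qed

definition reduced :: "nat \<Rightarrow> 'n::finite diffop \<Rightarrow> bool" where
  "reduced M R \<longleftrightarrow> (\<exists>c. R = (\<lambda>f. \<Sum>b\<in>exponent_box M. c b * pdpow b f))"

lemma reduced_pdpow: "b \<in> exponent_box M \<Longrightarrow> reduced M (\<lambda>f. r * pdpow b f)"
  unfolding reduced_def
proof (intro exI[of _ "\<lambda>b'. if b' = b then r else 0"] ext)
  fix f assume "b \<in> exponent_box M"
  moreover have "(\<Sum>b'\<in>exponent_box M. (if b' = b then r else 0) * pdpow b' f)
      = (\<Sum>b'\<in>exponent_box M. if b' = b then r * pdpow b f else 0)"
    by (rule sum.cong) auto
  ultimately show "r * pdpow b f = (\<Sum>b'\<in>exponent_box M. (if b' = b then r else 0) * pdpow b' f)"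
    by (simp add: finite_exponent_box)
qed

lemma reduced_add: "reduced M R1 \<Longrightarrow> reduced M R2 \<Longrightarrow> reduced M (\<lambda>f. R1 f + R2 f)"
proof -
  assume "reduced M R1" "reduced M R2"
  then obtain c1 c2 where "R1 = (\<lambda>f. \<Sum>b\<in>exponent_box M. c1 b * pdpow b f)"
    "R2 = (\<lambda>f. \<Sum>b\<in>exponent_box M. c2 b * pdpow b f)"
    unfolding reduced_def by blast
  then show ?thesis unfolding reduced_def
    by (intro exI[of _ "\<lambda>b. c1 b + c2 b"]) (simp add: distrib_right sum.distrib)
qed

lemma reduced_diff: "reduced M R1 \<Longrightarrow> reduced M R2 \<Longrightarrow> reduced M (\<lambda>f. R1 f - R2 f)"
proof -
  assume "reduced M R1" "reduced M R2"
  then obtain c1 c2 where "R1 = (\<lambda>f. \<Sum>b\<in>exponent_box M. c1 b * pdpow b f)"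
    "R2 = (\<lambda>f. \<Sum>b\<in>exponent_box M. c2 b * pdpow b f)"
    unfolding reduced_def by blast
  then show ?thesis unfolding reduced_def
    by (intro exI[of _ "\<lambda>b. c1 b - c2 b"]) (simp add: left_diff_distrib sum_subtractf)
qed

lemma reduced_mult_left: "reduced M R \<Longrightarrow> reduced M (\<lambda>f. r * R f)"
proof -
  assume "reduced M R"
  then obtain c where "R = (\<lambda>f. \<Sum>b\<in>exponent_box M. c b * pdpow b f)"
    unfolding reduced_def by blast
  then show ?thesis unfolding reduced_def
    by (intro exI[of _ "\<lambda>b. r * c b"]) (simp add: sum_distrib_left mult.assoc)
qed

lemma reduced_sum: "finite S \<Longrightarrow> (\<And>x. x \<in> S \<Longrightarrow> reduced M (R x)) \<Longrightarrow> reduced M (\<lambda>f. \<Sum>x\<in>S. R x f)"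
proof (induction S rule: finite_induct)
  case empty
  show ?case unfolding reduced_def by (auto intro!: exI[of _ "\<lambda>_. 0"])
next
  case (insert x S)
  then show ?case using reduced_add[of M "R x"] by simp
qed

lemma reduce_lead_coeff_horn_pdpow:
  assumes M: "M \<ge> 1" and b: "b \<in> exponent_box M"
  shows "\<exists>R. reduced M R \<and>
    lideal_cong (range (falling_horn M)) (\<lambda>f. (lead_coeff_horn M k * r) * pdpow (single k 1 + b) f) R"
proof (cases "lookup b k + 1 < M")
  case True
  then have "single k 1 + b \<in> exponent_box M" using b
    by (auto simp: exponent_box_def lookup_add lookup_single when_def)
  then show ?thesis using reduced_pdpow lideal_cong_refl by blast
next
  case False
  with b have bk: "lookup b k = M - 1" by (auto simp: exponent_box_def dest: spec[of _ k])
  define b' where "b' = b - single k (M - 1)"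
  have b'k: "lookup b' k = 0" using bk by (simp add: b'_def lookup_minus)
  have b_eq: "b = single k (M - 1) + b'" unfolding b'_def using bk
    by (intro poly_mapping_eqI) (auto simp: lookup_add lookup_minus lookup_single when_def)
  have b_Suc_eq: "single k 1 + b = single k M + b'" using M
    by (simp add: b_eq add.assoc[symmetric] single_add[symmetric])
  define R where "R = (\<lambda>f. (- (r * single (single k M) (of_nat M))) * pdpow b f)"
  text \<open>\<open>\<partial>\<^sup>b\<^sup>' H\<^sub>k\<close> lies in the ideal; as \<open>\<partial>\<^sup>b\<^sup>'\<close> does not involve \<open>x\<^sub>k\<close> it commutes
    with \<open>H\<^sub>k\<close>, so the normal form of \<open>H\<^sub>k\<close> expands it as below.\<close>
  have "r * pdpow b' (falling_horn M k f) = (lead_coeff_horn M k * r) * pdpow (single k 1 + b) f - R f" for f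
  proof -
    have "r * pdpow b' (falling_horn M k f) = r * falling_horn M k (pdpow b' f)"
      by (simp only: pdpow_falling_horn_commute[OF b'k])
    also have "\<dots> = r * (lead_coeff_horn M k * pdpow (single k M) (pdpow b' f)
        + single (single k M) (of_nat M) * pdpow (single k (M - 1)) (pdpow b' f))"
      by (simp only: falling_horn_eq[OF M])
    also have "pdpow (single k M) (pdpow b' f) = pdpow (single k 1 + b) f"
      by (simp only: b_Suc_eq pdpow_add comp_apply)
    also have "pdpow (single k (M - 1)) (pdpow b' f) = pdpow b f"
      by (simp only: b_eq pdpow_add comp_apply)
    finally show ?thesis by (simp add: R_def algebra_simps)
  qed
  moreover have "(\<lambda>f. r * pdpow b' (falling_horn M k f)) \<in> lideal (range (falling_horn M))"
    by (intro lideal_mult_left lideal_weylI[OF weyl_pdpow] lideal_gen) simp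
  ultimately have "lideal_cong (range (falling_horn M))
      (\<lambda>f. (lead_coeff_horn M k * r) * pdpow (single k 1 + b) f) R"
    unfolding lideal_cong_def by simp
  moreover have "reduced M R" unfolding R_def by (rule reduced_pdpow[OF b])
  ultimately show ?thesis by blast
qed

lemma reduce_lead_coeff_horn_pd:
  assumes M: "M \<ge> 1" and R: "reduced M R"
  shows "\<exists>R'. reduced M R' \<and>
    lideal_cong (range (falling_horn M)) (\<lambda>f. lead_coeff_horn M k * pd k (R f)) R'"
proof -
  let ?G = "range (falling_horn M)" and ?w = "lead_coeff_horn M k" and ?E = "exponent_box M"
  obtain c where c: "R = (\<lambda>f. \<Sum>b\<in>?E. c b * pdpow b f)"
    using R unfolding reduced_def by blast
  have "\<forall>b\<in>?E. \<exists>S. reduced M S \<and> lideal_cong ?G (\<lambda>f. (?w * c b) * pdpow (single k 1 + b) f) S"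
    using reduce_lead_coeff_horn_pdpow[OF M] by blast
  then obtain S where S: "\<And>b. b \<in> ?E \<Longrightarrow> reduced M (S b)"
    "\<And>b. b \<in> ?E \<Longrightarrow> lideal_cong ?G (\<lambda>f. (?w * c b) * pdpow (single k 1 + b) f) (S b)"
    by metis
  define R' where "R' = (\<lambda>f. (\<Sum>b\<in>?E. S b f) + (\<Sum>b\<in>?E. (?w * pd k (c b)) * pdpow b f))"
  have "?w * pd k (R f) = (\<Sum>b\<in>?E. (?w * c b) * pdpow (single k 1 + b) f)
      + (\<Sum>b\<in>?E. (?w * pd k (c b)) * pdpow b f)" for f
  proof -
    have "pd k (R f) = (\<Sum>b\<in>?E. c b * pdpow (single k 1 + b) f + pd k (c b) * pdpow b f)"
      by (simp add: c Modules.additive.sum[OF additive_pd] pd_mult pd_pdpow)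
    then show ?thesis by (simp add: sum_distrib_left sum.distrib distrib_left mult.assoc)
  qed
  moreover have "lideal_cong ?G
      (\<lambda>f. (\<Sum>b\<in>?E. (?w * c b) * pdpow (single k 1 + b) f) + (\<Sum>b\<in>?E. (?w * pd k (c b)) * pdpow b f)) R'"
    unfolding R'_def
    by (rule lideal_cong_add[OF lideal_cong_sum[OF finite_exponent_box S(2)] lideal_cong_refl])
  moreover have "reduced M R'"
    unfolding R'_def
    by (rule reduced_add[OF reduced_sum[OF finite_exponent_box S(1)]
          reduced_sum[OF finite_exponent_box reduced_pdpow]])
  ultimately show ?thesis by auto
qed

lemma peval_lead_coeff_horn: "peval (lead_coeff_horn M k) (\<lambda>_. 2) = 2 ^ M"
  by (simp add: lead_coeff_horn_def Modules.additive.diff[OF additive_peval] peval_single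
      monomial_value_single)

text \<open>Multivariate polynomials are not known to the library to form a domain, so the
  multiplier \<open>q\<close> is certified to be nonzero by its value at \<open>(2, \<dots>, 2)\<close>, where the
  leading coefficients \<open>x\<^sub>k\<^sup>M\<^sup>+\<^sup>1 - x\<^sub>k\<^sup>M\<close> do not vanish.\<close>
lemma reduce_pdpow:
  fixes a :: "'n::finite \<Rightarrow>\<^sub>0 nat"
  assumes M: "M \<ge> 1"
  shows "\<exists>q R. peval q (\<lambda>_. 2) \<noteq> 0 \<and> reduced M R \<and>
    lideal_cong (range (falling_horn M)) (\<lambda>f. q * pdpow a f) R"
proof (induction a rule: exponent_induct)
  case zero
  have "0 \<in> exponent_box M" using M by (simp add: exponent_box_def)
  then have "reduced M (\<lambda>f. 1 * pdpow 0 f)" by (rule reduced_pdpow)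
  moreover have "peval (1::'n mpoly) (\<lambda>_. 2) \<noteq> 0" by simp
  ultimately show ?case using lideal_cong_refl by blast
next
  case (step a k)
  let ?G = "range (falling_horn M)" and ?w = "lead_coeff_horn M k"
  obtain q R where q: "peval q (\<lambda>_. 2) \<noteq> 0" and R: "reduced M R"
    and qR: "lideal_cong ?G (\<lambda>f. q * pdpow a f) R"
    using step by blast
  obtain R' where R': "reduced M R'" and wR: "lideal_cong ?G (\<lambda>f. ?w * pd k (R f)) R'"
    using reduce_lead_coeff_horn_pd[OF M R] by blast
  text \<open>Apply \<open>w q \<partial>\<^sub>k\<close> to \<open>q \<partial>\<^sup>a \<equiv> R\<close> and cancel the Leibniz term \<open>w q (\<partial>\<^sub>k q) \<partial>\<^sup>a\<close>
    with \<open>w (\<partial>\<^sub>k q) R\<close>.\<close>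
  have "lideal_cong ?G (\<lambda>f. (?w * q) * pd k (q * pdpow a f)) (\<lambda>f. (?w * q) * pd k (R f))"
    by (rule lideal_cong_mult_left[OF lideal_cong_weyl[OF weyl_d qR]])
  also have "lideal_cong ?G (\<lambda>f. (?w * q) * pd k (R f)) (\<lambda>f. q * R' f)"
    using lideal_cong_mult_left[OF wR, of q] by (simp add: mult_ac)
  finally have "lideal_cong ?G
      (\<lambda>f. (?w * q) * pd k (q * pdpow a f) - (?w * pd k q) * (q * pdpow a f))
      (\<lambda>f. q * R' f - (?w * pd k q) * R f)"
    by (rule lideal_cong_diff[OF _ lideal_cong_mult_left[OF qR]])
  moreover have "(?w * q) * pd k (q * pdpow a f) - (?w * pd k q) * (q * pdpow a f)
      = (?w * q * q) * pdpow (a + single k 1) f" for f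
    by (simp add: pd_mult pd_pdpow add.commute algebra_simps)
  moreover have "reduced M (\<lambda>f. q * R' f - (?w * pd k q) * R f)"
    by (intro reduced_diff reduced_mult_left R R')
  moreover have "peval (?w * q * q) (\<lambda>_. 2) \<noteq> 0"
    using q by (simp add: peval_mult peval_lead_coeff_horn)
  ultimately show ?case by auto
qed

lemma holonomic_falling_horn:
  assumes "M \<ge> 1"
  shows "holonomic (falling_P M) (falling_Q M :: 'n::finite \<Rightarrow> _)"
  unfolding holonomic_def
proof (intro exI[of _ "exponent_box M"] conjI allI)
  fix a :: "'n \<Rightarrow>\<^sub>0 nat"
  obtain q R where q: "peval q (\<lambda>_. 2) \<noteq> 0" and R: "reduced M R"
    and qR: "lideal_cong (range (falling_horn M)) (\<lambda>f. q * pdpow a f) R"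
    using reduce_pdpow[OF assms] by blast
  obtain c where "R = (\<lambda>f. \<Sum>b\<in>exponent_box M. c b * pdpow b f)"
    using R unfolding reduced_def by blast
  then have "(\<lambda>f. mulop q (pdpow a f) - (\<Sum>b\<in>exponent_box M. mulop (c b) (pdpow b f)))
      \<in> lideal (range (falling_horn M))"
    using qR by (simp add: lideal_cong_def mulop_def)
  moreover have "q \<noteq> 0" using q by auto
  ultimately show "\<exists>q c. q \<noteq> 0 \<and> (\<lambda>f. mulop q (pdpow a f) - (\<Sum>b\<in>exponent_box M. mulop (c b) (pdpow b f)))
      \<in> lideal (range (falling_horn M))"
    by blast
qed (rule finite_exponent_box)

lemma lookup_poly_in_var:
  "lookup (poly_in_var j v) m = (if m = single j (lookup m j) then coeff v (lookup m j) else 0)"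
proof -
  have single_eq_iff: "(single j k = m) = (k = lookup m j \<and> m = single j (lookup m j))" for k
    by auto
  have "lookup (poly_in_var j v) m = (\<Sum>k\<le>degree v. coeff v k when single j k = m)"
    by (simp add: poly_in_var_def lookup_sum lookup_single)
  also have "\<dots> = (\<Sum>k\<le>degree v. if k = lookup m j \<and> m = single j (lookup m j) then coeff v k else 0)"
    by (rule sum.cong) (simp_all only: when_def single_eq_iff)
  also have "\<dots> = (if m = single j (lookup m j) then coeff v (lookup m j) else 0)"
    by (cases "m = single j (lookup m j)") (simp_all add: coeff_eq_0 not_le)
  finally show ?thesis .
qed

lemma keys_poly_in_var: "keys (poly_in_var j v) = (\<lambda>k. single j k) ` {k. coeff v k \<noteq> 0}"
  by (auto simp: in_keys_iff lookup_poly_in_var split: if_splits)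

lemma poly_in_var_eq_0_iff: "poly_in_var j v = 0 \<longleftrightarrow> v = 0"
proof
  assume "poly_in_var j v = 0"
  then have "coeff v k = 0" for k
    using lookup_poly_in_var[of j v "single j k"] by simp
  then show "v = 0" by (simp add: poly_eq_iff)
qed (simp add: poly_in_var_def)

lemma tdeg_poly_in_var: "tdeg (poly_in_var (j::'n::finite) v) = degree v"
proof (cases "v = 0")
  case False
  have "(\<lambda>m::'n \<Rightarrow>\<^sub>0 nat. \<Sum>k\<in>UNIV. lookup m k) ` keys (poly_in_var j v) = {k. coeff v k \<noteq> 0}"
    by (simp add: keys_poly_in_var image_image sum_lookup_single)
  moreover have "Max {k. coeff v k \<noteq> 0} = degree v"
  proof (rule Max_eqI)
    show "finite {k. coeff v k \<noteq> 0}"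
      by (rule finite_subset[of _ "{..degree v}"]) (auto intro: le_degree)
  qed (auto intro: le_degree simp: False)
  ultimately show ?thesis using False by (simp add: tdeg_def poly_in_var_eq_0_iff)
qed (simp add: tdeg_def poly_in_var_def)

lemma nonconfluent_falling_horn: "M \<ge> 1 \<Longrightarrow> nonconfluent (falling_P M) (falling_Q M :: 'n::finite \<Rightarrow> _)"
  by (simp add: nonconfluent_def falling_P_def falling_Q_def tdeg_poly_in_var degree_pcompose
      degree_falling_poly)

text \<open>Since \<open>P\<^sub>j(s) = Q\<^sub>j(s + e\<^sub>j)\<close>, the constant coefficient \<open>\<phi> = 1\<close> defines the system.\<close>
lemma horn_system_falling_horn: "horn_system (falling_P M) (falling_Q M :: 'n::finite \<Rightarrow> _)"
  unfolding horn_system_def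
proof (intro conjI allI exI[of _ "\<lambda>_. 1"] exI[of _ UNIV])
  show "falling_Q M j \<noteq> 0" for j :: 'n
    by (simp add: falling_Q_def poly_in_var_eq_0_iff falling_poly_def)
  show "\<forall>s\<in>UNIV. (1::complex) \<noteq> 0 \<and>
      (\<forall>j. 1 * peval (falling_Q M j) (shift s j) = peval (falling_P M j) s * 1)"
    by (simp add: falling_Q_def falling_P_def peval_poly_in_var shift_def poly_pcompose add.commute)
qed simp_all

theorem theorem3p1:
  fixes p :: "('n::finite \<Rightarrow>\<^sub>0 nat) \<Rightarrow>\<^sub>0 complex"
  shows "\<exists>P Q :: 'n \<Rightarrow> 'n mpoly.
           horn_system P Q \<and> nonconfluent P Q \<and> holonomic P Q \<and>
           (\<forall>j. horn_op P Q j p = 0) \<and>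
           (\<exists>G. finite G \<and> G \<subseteq> weyl \<and>
                lideal G = lideal (Set.range (horn_op P Q)) \<and>
                (\<forall>g\<in>G. \<forall>h\<in>G. g \<circ> h = h \<circ> g))"
proof -
  define M where "M = Suc (Suc (\<Sum>m\<in>keys p. \<Sum>k\<in>UNIV. lookup m k))"
  have M: "M \<ge> 1" by (simp add: M_def)
  have "Suc (lookup m k) < M" if "m \<in> keys p" for m k
  proof -
    have "lookup m k \<le> (\<Sum>k\<in>UNIV. lookup m k)" by (rule member_le_sum) auto
    also have "\<dots> \<le> (\<Sum>m\<in>keys p. \<Sum>k\<in>UNIV. lookup m k)" by (rule member_le_sum[OF that]) auto
    finally show ?thesis by (simp add: M_def)
  qed
  then have "falling_horn M j p = 0" for j by (rule falling_horn_annihilates)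
  then show ?thesis
    using horn_system_falling_horn nonconfluent_falling_horn[OF M] holonomic_falling_horn[OF M]
      weyl_falling_horn[OF M] falling_horn_commute
    by (intro exI[of _ "falling_P M"] exI[of _ "falling_Q M"] conjI exI[of _ "range (falling_horn M)"])
      auto
qed

end
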